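(* Let $\nu$ be a bounded continuous valuation on Johnstone's dcpo $\mathcal J$ (Scott topology). For each Scott-open $U\subseteq\mathcal J$ let $\nu^*(U)=\nu(U)-\sum_{a\in N}\nu_{\{a\}}(U)$. Then $\nu^*$ is a bounded continuous valuation on $\mathcal J$.
   Context: Johnstone's dcpo: $\mathcal J=\mathbb N\times(\mathbb N\cup\{\infty\})$ ordered by $(a,b)\le(c,d)$ iff either ($a=c$ and $b\le d$) or ($d=\infty$ and $b\le c$). $N=\mathcal J\setminus\{(i,\infty):i\in\mathbb N\}$ is the set of non-maximal elements. For $n\in\mathbb N$ let $L_n=\{(j,n):j\in\mathbb N\}$. For $a=(j,n)\in N$, the sets $U_a=\{a\}\cup{\uparrow}L_{n+1}$ and $V_a={\uparrow}L_{n+1}$ are Scott-open with $V_a\subseteq U_a$ and $U_a\setminus V_a=\{a\}$, and $\nu_{\{a\}}$ is the continuous valuation $W\mapsto\nu(W\cap U_a)-\nu(W\cap V_a)$. A valuation is a strict, monotone, modular map $\mathcal OX\to[0,\infty]$; continuous if it preserves directed suprema of opens; bounded if $\nu(X)<\infty$. *)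

theory Defs
  imports "HOL-Analysis.Analysis" "HOL-Library.Extended_Nat"
begin

text \<open>Johnstone's dcpo: carrier nat \<times> enat (enat = nat \<union> {\<infinity>}).\<close>
type_synonym jpt = "nat \<times> enat"

definition jle :: "jpt \<Rightarrow> jpt \<Rightarrow> bool" where
  "jle x y \<longleftrightarrow> (fst x = fst y \<and> snd x \<le> snd y) \<or> (snd y = \<infinity> \<and> snd x \<le> enat (fst y))"

definition j_directed :: "jpt set \<Rightarrow> bool" where
  "j_directed D \<longleftrightarrow> D \<noteq> {} \<and> (\<forall>x\<in>D. \<forall>y\<in>D. \<exists>z\<in>D. jle x z \<and> jle y z)"

definition j_is_lub :: "jpt set \<Rightarrow> jpt \<Rightarrow> bool" where
  "j_is_lub D s \<longleftrightarrow> (\<forall>d\<in>D. jle d s) \<and> (\<forall>u. (\<forall>d\<in>D. jle d u) \<longrightarrow> jle s u)"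

definition j_upper :: "jpt set \<Rightarrow> bool" where
  "j_upper U \<longleftrightarrow> (\<forall>x\<in>U. \<forall>y. jle x y \<longrightarrow> y \<in> U)"

definition scott_open :: "jpt set \<Rightarrow> bool" where
  "scott_open U \<longleftrightarrow> j_upper U \<and>
     (\<forall>D s. j_directed D \<and> j_is_lub D s \<and> s \<in> U \<longrightarrow> D \<inter> U \<noteq> {})"

definition is_valuation :: "(jpt set \<Rightarrow> ennreal) \<Rightarrow> bool" where
  "is_valuation \<nu> \<longleftrightarrow>
     \<nu> {} = 0 \<and>
     (\<forall>U V. scott_open U \<and> scott_open V \<and> U \<subseteq> V \<longrightarrow> \<nu> U \<le> \<nu> V) \<and>
     (\<forall>U V. scott_open U \<and> scott_open V \<longrightarrow> \<nu> U + \<nu> V = \<nu> (U \<union> V) + \<nu> (U \<inter> V))"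

definition is_continuous_valuation :: "(jpt set \<Rightarrow> ennreal) \<Rightarrow> bool" where
  "is_continuous_valuation \<nu> \<longleftrightarrow> is_valuation \<nu> \<and>
     (\<forall>\<D>. \<D> \<noteq> {} \<and> (\<forall>U\<in>\<D>. scott_open U) \<and>
          (\<forall>U\<in>\<D>. \<forall>V\<in>\<D>. \<exists>W\<in>\<D>. U \<subseteq> W \<and> V \<subseteq> W)
        \<longrightarrow> \<nu> (\<Union>\<D>) = (SUP U\<in>\<D>. \<nu> U))"

definition is_bounded_continuous_valuation :: "(jpt set \<Rightarrow> ennreal) \<Rightarrow> bool" where
  "is_bounded_continuous_valuation \<nu> \<longleftrightarrow> is_continuous_valuation \<nu> \<and> \<nu> UNIV < \<infinity>"

definition Nset :: "jpt set" where
  "Nset = {(i, enat n) | i n. True}"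

definition Lset :: "nat \<Rightarrow> jpt set" where
  "Lset n = {(j, enat n) | j. True}"

definition jup :: "jpt set \<Rightarrow> jpt set" where
  "jup A = {y. \<exists>x\<in>A. jle x y}"

definition Vset :: "jpt \<Rightarrow> jpt set" where
  "Vset a = jup (Lset (Suc (the_enat (snd a))))"

definition Uset :: "jpt \<Rightarrow> jpt set" where
  "Uset a = insert a (Vset a)"

definition nu_single :: "(jpt set \<Rightarrow> ennreal) \<Rightarrow> jpt \<Rightarrow> jpt set \<Rightarrow> ennreal" where
  "nu_single \<nu> a W = \<nu> (W \<inter> Uset a) - \<nu> (W \<inter> Vset a)"

definition atom_sum :: "(jpt set \<Rightarrow> ennreal) \<Rightarrow> jpt set \<Rightarrow> ennreal" where
  "atom_sum \<nu> U = (\<Sum>\<^sub>\<infinity>a\<in>Nset. nu_single \<nu> a U)"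

definition nu_star :: "(jpt set \<Rightarrow> ennreal) \<Rightarrow> jpt set \<Rightarrow> ennreal" where
  "nu_star \<nu> U = \<nu> U - atom_sum \<nu> U"

end

theory Submission
  imports Defs
begin

(* Since nu is bounded, all values are finite and one can compute with reals.  For every
   monotone modular mu on the Scott-open sets and finitely many points a of N, the masses
   mu(U_a) - mu(V_a) sum to at most mu(UNIV) - mu({}): adding the points of level k one at a
   time to the upper set of L_(k+1) costs exactly these masses by modularity and stays inside
   the upper set of L_k, and the resulting bounds telescope over k.  Applied to mu = nu this is
   the first claim; applied to X |-> nu(X \<inter> V) - nu(X \<inter> U) for U \<subseteq> V it shows that the atom
   sum grows no faster than nu, i.e. nu*(V) - nu*(U) lies between 0 and nu(V) - nu(U).  Hence
   nu* is monotone and inherits continuity from nu; modularity holds termwise. *)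

definition above_level :: "nat \<Rightarrow> jpt set" where
  "above_level n = {x. enat n \<le> snd x}"

lemma j_is_lub_finite_mem:
  assumes lub: "j_is_lub D s" and "D \<noteq> {}" and s: "snd s = enat m"
  shows "s \<in> D"
proof (rule ccontr)
  assume "s \<notin> D"
  have below: "fst d = fst s \<and> snd d < enat m" if "d \<in> D" for d
  proof -
    have "jle d s" using lub that by (simp add: j_is_lub_def)
    moreover have "d \<noteq> s" using that \<open>s \<notin> D\<close> by auto
    ultimately show ?thesis using s by (auto simp: jle_def prod_eq_iff order_le_less)
  qed
  obtain d0 where "d0 \<in> D" using \<open>D \<noteq> {}\<close> by blast
  then have "m > 0" using below[of d0] by (cases "snd d0") auto
  have "jle d (fst s, enat (m - 1))" if "d \<in> D" for d
    using below[OF that] \<open>m > 0\<close> by (cases "snd d") (auto simp: jle_def)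
  then have "jle s (fst s, enat (m - 1))" using lub by (simp add: j_is_lub_def)
  then show False using s \<open>m > 0\<close> by (auto simp: jle_def)
qed

lemma j_is_lub_infinite_unbounded:
  assumes lub: "j_is_lub D s" and s: "snd s = \<infinity>"
  shows "\<exists>d\<in>D. enat n \<le> snd d"
proof (rule ccontr)
  assume "\<not> ?thesis"
  then have "snd d \<le> enat (Suc (max n (fst s)))" if "d \<in> D" for d
    using that by (meson linear order.trans enat_ord_simps(1) le_SucI max.cobounded1)
  then have "jle d (Suc (max n (fst s)), \<infinity>)" if "d \<in> D" for d
    using that by (simp add: jle_def)
  then have "jle s (Suc (max n (fst s)), \<infinity>)" using lub by (simp add: j_is_lub_def)
  then show False using s by (auto simp: jle_def)
qed

lemma scott_open_if_upper_contains_level: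
  assumes "j_upper E" and "above_level n \<subseteq> E"
  shows "scott_open E"
  unfolding scott_open_def
proof (intro conjI allI impI assms(1))
  fix D s assume "j_directed D \<and> j_is_lub D s \<and> s \<in> E"
  then show "D \<inter> E \<noteq> {}"
    using j_is_lub_finite_mem[of D s] j_is_lub_infinite_unbounded[of D s n] assms(2)
    by (cases "snd s") (auto simp: j_directed_def above_level_def)
qed

lemma scott_open_empty: "scott_open {}"
  by (simp add: scott_open_def j_upper_def)

lemma scott_open_Int:
  assumes A: "scott_open A" and B: "scott_open B"
  shows "scott_open (A \<inter> B)"
  unfolding scott_open_def
proof (intro conjI allI impI)
  show "j_upper (A \<inter> B)" using A B unfolding scott_open_def j_upper_def by blast
  fix D s assume h: "j_directed D \<and> j_is_lub D s \<and> s \<in> A \<inter> B"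
  then obtain x y where "x \<in> D \<inter> A" "y \<in> D \<inter> B"
    using A B unfolding scott_open_def by blast
  then obtain z where "z \<in> D" "jle x z" "jle y z" using h unfolding j_directed_def by blast
  then show "D \<inter> (A \<inter> B) \<noteq> {}"
    using A B \<open>x \<in> D \<inter> A\<close> \<open>y \<in> D \<inter> B\<close> unfolding scott_open_def j_upper_def by blast
qed

lemma scott_open_Union: "(\<And>U. U \<in> \<D> \<Longrightarrow> scott_open U) \<Longrightarrow> scott_open (\<Union>\<D>)"
  unfolding scott_open_def j_upper_def by blast

lemma scott_open_Un: "scott_open A \<Longrightarrow> scott_open B \<Longrightarrow> scott_open (A \<union> B)"
  using scott_open_Union[of "{A, B}"] by auto

lemma scott_open_UNIV: "scott_open UNIV"
  by (rule scott_open_if_upper_contains_level[of _ 0]) (auto simp: j_upper_def)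

lemma j_upper_above_level: "j_upper (above_level n)"
  unfolding j_upper_def above_level_def jle_def by (auto intro: order_trans)

lemma scott_open_above_level: "scott_open (above_level n)"
  using scott_open_if_upper_contains_level j_upper_above_level by blast

lemma scott_open_above_level_Un:
  assumes "S \<subseteq> {x. snd x = enat k}"
  shows "scott_open (above_level (Suc k) \<union> S)"
proof (rule scott_open_if_upper_contains_level)
  have "y \<in> above_level (Suc k) \<union> S" if "x \<in> S" "jle x y" for x y
  proof (cases "y = x")
    case False
    with that assms have "snd y = \<infinity> \<or> enat k < snd y"
      by (auto simp: jle_def prod_eq_iff order_le_less)
    then show ?thesis by (auto simp: above_level_def Suc_ile_eq)
  qed (use that in simp)
  then show "j_upper (above_level (Suc k) \<union> S)"
    using j_upper_above_level unfolding j_upper_def by blast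
qed auto

lemma jup_Lset: "jup (Lset n) = above_level n"
  by (force simp: jup_def Lset_def above_level_def jle_def)

lemma Vset_eq: "Vset a = above_level (Suc (the_enat (snd a)))"
  by (simp add: Vset_def jup_Lset)

lemma scott_open_Vset: "scott_open (Vset a)"
  by (simp add: Vset_eq scott_open_above_level)

lemma scott_open_Uset:
  assumes "a \<in> Nset" shows "scott_open (Uset a)"
  using assms scott_open_above_level_Un[of "{a}"]
  by (auto simp: Nset_def Uset_def Vset_eq)

definition mono_on_opens :: "(jpt set \<Rightarrow> 'a::ord) \<Rightarrow> bool" where
  "mono_on_opens \<mu> \<longleftrightarrow> (\<forall>U V. scott_open U \<longrightarrow> scott_open V \<longrightarrow> U \<subseteq> V \<longrightarrow> \<mu> U \<le> \<mu> V)"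

definition modular_on_opens :: "(jpt set \<Rightarrow> 'a::plus) \<Rightarrow> bool" where
  "modular_on_opens \<mu> \<longleftrightarrow>
     (\<forall>U V. scott_open U \<longrightarrow> scott_open V \<longrightarrow> \<mu> U + \<mu> V = \<mu> (U \<union> V) + \<mu> (U \<inter> V))"

lemma mono_on_opensD: "mono_on_opens \<mu> \<Longrightarrow> scott_open U \<Longrightarrow> scott_open V \<Longrightarrow> U \<subseteq> V \<Longrightarrow> \<mu> U \<le> \<mu> V"
  by (simp add: mono_on_opens_def)

lemma modular_on_opensD:
  "modular_on_opens \<mu> \<Longrightarrow> scott_open U \<Longrightarrow> scott_open V \<Longrightarrow> \<mu> U + \<mu> V = \<mu> (U \<union> V) + \<mu> (U \<inter> V)"
  by (simp add: modular_on_opens_def)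

lemma is_valuation_iff: "is_valuation \<nu> \<longleftrightarrow> \<nu> {} = 0 \<and> mono_on_opens \<nu> \<and> modular_on_opens \<nu>"
  by (auto simp: is_valuation_def mono_on_opens_def modular_on_opens_def)

lemma modular_on_opens_Int:
  assumes "modular_on_opens \<mu>" and "scott_open S"
  shows "modular_on_opens (\<lambda>X. \<mu> (X \<inter> S))"
  unfolding modular_on_opens_def
proof (intro allI impI)
  fix U V assume "scott_open U" "scott_open V"
  then have "\<mu> (U \<inter> S) + \<mu> (V \<inter> S) = \<mu> (U \<inter> S \<union> V \<inter> S) + \<mu> (U \<inter> S \<inter> (V \<inter> S))"
    using assms by (intro modular_on_opensD scott_open_Int)
  moreover have "U \<inter> S \<union> V \<inter> S = (U \<union> V) \<inter> S" "U \<inter> S \<inter> (V \<inter> S) = U \<inter> V \<inter> S"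
    by blast+
  ultimately show "\<mu> (U \<inter> S) + \<mu> (V \<inter> S) = \<mu> ((U \<union> V) \<inter> S) + \<mu> (U \<inter> V \<inter> S)"
    by (simp only:)
qed

lemma modular_on_opens_diff:
  fixes \<mu> \<kappa> :: "jpt set \<Rightarrow> 'a::ab_group_add"
  assumes "modular_on_opens \<mu>" and "modular_on_opens \<kappa>"
  shows "modular_on_opens (\<lambda>X. \<mu> X - \<kappa> X)"
  unfolding modular_on_opens_def
proof (intro allI impI)
  fix U V assume "scott_open U" "scott_open V"
  then have "\<mu> U + \<mu> V = \<mu> (U \<union> V) + \<mu> (U \<inter> V)" "\<kappa> U + \<kappa> V = \<kappa> (U \<union> V) + \<kappa> (U \<inter> V)"
    using assms by (simp_all add: modular_on_opensD)
  then show "\<mu> U - \<kappa> U + (\<mu> V - \<kappa> V) = \<mu> (U \<union> V) - \<kappa> (U \<union> V) + (\<mu> (U \<inter> V) - \<kappa> (U \<inter> V))"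
    by (simp add: algebra_simps)
qed

lemma mono_on_opens_relative_diff:
  fixes \<mu> :: "jpt set \<Rightarrow> real"
  assumes mono: "mono_on_opens \<mu>" and modular: "modular_on_opens \<mu>"
    and U: "scott_open U" and V: "scott_open V" and "U \<subseteq> V"
  shows "mono_on_opens (\<lambda>X. \<mu> (X \<inter> V) - \<mu> (X \<inter> U))"
  unfolding mono_on_opens_def
proof (intro allI impI)
  fix A B assume A: "scott_open A" and B: "scott_open B" and "A \<subseteq> B"
  have opens: "scott_open (A \<inter> V)" "scott_open (B \<inter> U)" "scott_open (B \<inter> V)"
    using A B U V by (simp_all add: scott_open_Int)
  have "A \<inter> V \<inter> (B \<inter> U) = A \<inter> U" "A \<inter> V \<union> B \<inter> U \<subseteq> B \<inter> V"
    using \<open>U \<subseteq> V\<close> \<open>A \<subseteq> B\<close> by blast+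
  then have "\<mu> (A \<inter> V) + \<mu> (B \<inter> U) \<le> \<mu> (B \<inter> V) + \<mu> (A \<inter> U)"
    using modular_on_opensD[OF modular opens(1,2)] opens
      mono_on_opensD[OF mono scott_open_Un[OF opens(1,2)] opens(3)] by simp
  then show "\<mu> (A \<inter> V) - \<mu> (A \<inter> U) \<le> \<mu> (B \<inter> V) - \<mu> (B \<inter> U)"
    by simp
qed

lemma level_sum_le:
  fixes \<mu> :: "jpt set \<Rightarrow> real"
  assumes mono: "mono_on_opens \<mu>" and modular: "modular_on_opens \<mu>"
  shows "(\<Sum>j<J. \<mu> (Uset (j, enat k)) - \<mu> (Vset (j, enat k)))
           \<le> \<mu> (above_level k) - \<mu> (above_level (Suc k))"
proof -
  define E where "E J = above_level (Suc k) \<union> {(j, enat k) | j. j < J}" for J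
  have E_open: "scott_open (E J)" for J
    unfolding E_def by (rule scott_open_above_level_Un) auto
  have Uset: "Uset (j, enat k) = insert (j, enat k) (above_level (Suc k))"
    and Vset: "Vset (j, enat k) = above_level (Suc k)" for j
    by (simp_all add: Uset_def Vset_eq)
  have "\<mu> (E J) = \<mu> (above_level (Suc k)) + (\<Sum>j<J. \<mu> (Uset (j, enat k)) - \<mu> (Vset (j, enat k)))"
  proof (induction J)
    case 0
    show ?case by (simp add: E_def)
  next
    case (Suc J)
    have "E J \<union> Uset (J, enat k) = E (Suc J)" "E J \<inter> Uset (J, enat k) = above_level (Suc k)"
      by (auto simp: E_def Uset above_level_def)
    then have "\<mu> (E J) + \<mu> (Uset (J, enat k)) = \<mu> (E (Suc J)) + \<mu> (above_level (Suc k))"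
      using modular_on_opensD[OF modular E_open scott_open_Uset] by (simp add: Nset_def)
    then show ?case using Suc by (simp add: Vset)
  qed
  moreover have "\<mu> (E J) \<le> \<mu> (above_level k)"
    by (rule mono_on_opensD[OF mono E_open scott_open_above_level])
      (auto simp: E_def above_level_def Suc_ile_eq)
  ultimately show ?thesis by simp
qed

lemma box_sum_le:
  fixes \<mu> :: "jpt set \<Rightarrow> real"
  assumes mono: "mono_on_opens \<mu>" and modular: "modular_on_opens \<mu>"
  shows "(\<Sum>k<M. \<Sum>j<J. \<mu> (Uset (j, enat k)) - \<mu> (Vset (j, enat k))) \<le> \<mu> UNIV - \<mu> {}"
proof -
  have "(\<Sum>k<M. \<Sum>j<J. \<mu> (Uset (j, enat k)) - \<mu> (Vset (j, enat k)))
          \<le> (\<Sum>k<M. \<mu> (above_level k) - \<mu> (above_level (Suc k)))"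
    by (intro sum_mono level_sum_le[OF assms])
  also have "\<dots> = \<mu> (above_level 0) - \<mu> (above_level M)"
    by (rule sum_lessThan_telescope')
  also have "\<dots> \<le> \<mu> UNIV - \<mu> {}"
    using mono_on_opensD[OF mono scott_open_empty scott_open_above_level]
    by (simp add: above_level_def zero_enat_def[symmetric])
  finally show ?thesis .
qed

lemma sum_Uset_Vset_diff_le:
  fixes \<mu> :: "jpt set \<Rightarrow> real"
  assumes mono: "mono_on_opens \<mu>" and modular: "modular_on_opens \<mu>"
    and "finite F" and "F \<subseteq> Nset"
  shows "(\<Sum>a\<in>F. \<mu> (Uset a) - \<mu> (Vset a)) \<le> \<mu> UNIV - \<mu> {}"
proof -
  obtain J where J: "\<forall>j\<in>fst ` F. j < J"
    using \<open>finite F\<close> finite_nat_set_iff_bounded by blast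
  obtain M where M: "\<forall>k\<in>the_enat ` snd ` F. k < M"
    using \<open>finite F\<close> finite_nat_set_iff_bounded by blast
  define box where "box = (\<lambda>(j, k). (j, enat k)) ` ({..<J} \<times> {..<M})"
  have "F \<subseteq> box"
    using J M \<open>F \<subseteq> Nset\<close> by (force simp: box_def Nset_def)
  moreover have "\<mu> (Vset a) \<le> \<mu> (Uset a)" if "a \<in> Nset" for a
    by (rule mono_on_opensD[OF mono scott_open_Vset scott_open_Uset[OF that]]) (auto simp: Uset_def)
  moreover have "box \<subseteq> Nset"
    by (auto simp: box_def Nset_def)
  ultimately have "(\<Sum>a\<in>F. \<mu> (Uset a) - \<mu> (Vset a)) \<le> (\<Sum>a\<in>box. \<mu> (Uset a) - \<mu> (Vset a))"
    by (intro sum_mono2) (auto simp: box_def)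
  also have "\<dots> = (\<Sum>(j, k)\<in>{..<J} \<times> {..<M}. \<mu> (Uset (j, enat k)) - \<mu> (Vset (j, enat k)))"
    by (simp add: box_def sum.reindex inj_on_def case_prod_beta)
  also have "\<dots> = (\<Sum>k<M. \<Sum>j<J. \<mu> (Uset (j, enat k)) - \<mu> (Vset (j, enat k)))"
    by (simp add: sum.cartesian_product[symmetric] sum.swap[of _ "{..<M}"])
  also have "\<dots> \<le> \<mu> UNIV - \<mu> {}"
    by (rule box_sum_le[OF mono modular])
  finally show ?thesis .
qed

definition nu_single_real :: "(jpt set \<Rightarrow> real) \<Rightarrow> jpt \<Rightarrow> jpt set \<Rightarrow> real" where
  "nu_single_real \<mu> a W = \<mu> (W \<inter> Uset a) - \<mu> (W \<inter> Vset a)"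

lemma nu_single_real_empty: "nu_single_real \<mu> a {} = 0"
  by (simp add: nu_single_real_def)

lemma modular_on_opens_nu_single_real:
  assumes "modular_on_opens \<mu>" and "a \<in> Nset"
  shows "modular_on_opens (nu_single_real \<mu> a)"
  using modular_on_opens_diff[OF modular_on_opens_Int modular_on_opens_Int, OF assms(1)
      scott_open_Uset[OF assms(2)] assms(1) scott_open_Vset]
  by (simp add: nu_single_real_def[abs_def])

lemma nu_single_real_diff_eq:
  "nu_single_real \<mu> a V - nu_single_real \<mu> a U
     = (\<mu> (Uset a \<inter> V) - \<mu> (Uset a \<inter> U)) - (\<mu> (Vset a \<inter> V) - \<mu> (Vset a \<inter> U))"
  by (simp add: nu_single_real_def Int_commute)

lemma nu_single_real_mono:
  assumes "mono_on_opens \<mu>" "modular_on_opens \<mu>" and "a \<in> Nset"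
    and "scott_open U" "scott_open V" "U \<subseteq> V"
  shows "nu_single_real \<mu> a U \<le> nu_single_real \<mu> a V"
proof -
  have "Vset a \<subseteq> Uset a" by (auto simp: Uset_def)
  then have "\<mu> (Vset a \<inter> V) - \<mu> (Vset a \<inter> U) \<le> \<mu> (Uset a \<inter> V) - \<mu> (Uset a \<inter> U)"
    using mono_on_opensD[OF mono_on_opens_relative_diff[OF assms(1,2,4-6)]
        scott_open_Vset scott_open_Uset[OF assms(3)]] by blast
  then show ?thesis using nu_single_real_diff_eq[of \<mu> a V U] by linarith
qed

lemma nu_single_real_nonneg:
  assumes "mono_on_opens \<mu>" "modular_on_opens \<mu>" and "a \<in> Nset" and "scott_open W"
  shows "0 \<le> nu_single_real \<mu> a W"
  using nu_single_real_mono[OF assms(1-3) scott_open_empty assms(4)]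
  by (simp add: nu_single_real_empty)

lemma sum_nu_single_real_diff_le:
  assumes mono: "mono_on_opens \<mu>" and modular: "modular_on_opens \<mu>"
    and "finite F" "F \<subseteq> Nset"
    and U: "scott_open U" and V: "scott_open V" and "U \<subseteq> V"
  shows "(\<Sum>a\<in>F. nu_single_real \<mu> a V) \<le> (\<Sum>a\<in>F. nu_single_real \<mu> a U) + (\<mu> V - \<mu> U)"
proof -
  define \<kappa> where "\<kappa> X = \<mu> (X \<inter> V) - \<mu> (X \<inter> U)" for X
  have "mono_on_opens \<kappa>" "modular_on_opens \<kappa>"
    unfolding \<kappa>_def using mono_on_opens_relative_diff[OF assms(1,2,5-7)]
    by (auto intro!: modular_on_opens_diff modular_on_opens_Int modular U V)
  then have "(\<Sum>a\<in>F. \<kappa> (Uset a) - \<kappa> (Vset a)) \<le> \<kappa> UNIV - \<kappa> {}"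
    using sum_Uset_Vset_diff_le \<open>finite F\<close> \<open>F \<subseteq> Nset\<close> by blast
  then have "(\<Sum>a\<in>F. nu_single_real \<mu> a V - nu_single_real \<mu> a U) \<le> \<mu> V - \<mu> U"
    by (simp add: \<kappa>_def nu_single_real_diff_eq Int_commute)
  then show ?thesis
    by (simp add: sum_subtractf)
qed

lemma mono_on_opens_enn2real:
  "mono_on_opens \<alpha> \<Longrightarrow> (\<And>U. scott_open U \<Longrightarrow> \<alpha> U < \<infinity>) \<Longrightarrow> mono_on_opens (\<lambda>U. enn2real (\<alpha> U))"
  by (simp add: mono_on_opens_def enn2real_mono)

lemma modular_on_opens_enn2real:
  assumes "modular_on_opens \<alpha>" and fin: "\<And>U. scott_open U \<Longrightarrow> \<alpha> U < \<infinity>"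
  shows "modular_on_opens (\<lambda>U. enn2real (\<alpha> U))"
  unfolding modular_on_opens_def
proof (intro allI impI)
  fix U V assume U: "scott_open U" and V: "scott_open V"
  have "enn2real (\<alpha> U + \<alpha> V) = enn2real (\<alpha> (U \<union> V) + \<alpha> (U \<inter> V))"
    by (simp only: modular_on_opensD[OF assms(1) U V])
  moreover have "\<alpha> U < \<infinity>" "\<alpha> V < \<infinity>" "\<alpha> (U \<union> V) < \<infinity>" "\<alpha> (U \<inter> V) < \<infinity>"
    using fin U V scott_open_Un scott_open_Int by blast+
  ultimately show "enn2real (\<alpha> U) + enn2real (\<alpha> V) = enn2real (\<alpha> (U \<union> V)) + enn2real (\<alpha> (U \<inter> V))"
    by (simp add: enn2real_plus)
qed

lemma bounded_continuous_valuationD: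
  assumes "is_bounded_continuous_valuation \<nu>"
  shows "\<nu> {} = 0" "mono_on_opens \<nu>" "modular_on_opens \<nu>" "\<nu> UNIV < \<infinity>"
    and "\<And>\<D>. \<D> \<noteq> {} \<Longrightarrow> (\<And>U. U \<in> \<D> \<Longrightarrow> scott_open U)
           \<Longrightarrow> (\<And>U V. U \<in> \<D> \<Longrightarrow> V \<in> \<D> \<Longrightarrow> \<exists>W\<in>\<D>. U \<subseteq> W \<and> V \<subseteq> W)
           \<Longrightarrow> \<nu> (\<Union>\<D>) = (SUP U\<in>\<D>. \<nu> U)"
proof -
  have val: "is_valuation \<nu>" and bounded: "\<nu> UNIV < \<infinity>"
    and cont: "\<forall>\<D>. \<D> \<noteq> {} \<and> (\<forall>U\<in>\<D>. scott_open U) \<and> (\<forall>U\<in>\<D>. \<forall>V\<in>\<D>. \<exists>W\<in>\<D>. U \<subseteq> W \<and> V \<subseteq> W)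
             \<longrightarrow> \<nu> (\<Union>\<D>) = (SUP U\<in>\<D>. \<nu> U)"
    using assms unfolding is_bounded_continuous_valuation_def is_continuous_valuation_def
    by blast+
  then show "\<nu> {} = 0" "mono_on_opens \<nu>" "modular_on_opens \<nu>" "\<nu> UNIV < \<infinity>"
    by (simp_all add: is_valuation_iff)
  show "\<nu> (\<Union>\<D>) = (SUP U\<in>\<D>. \<nu> U)"
    if "\<D> \<noteq> {}" "\<And>U. U \<in> \<D> \<Longrightarrow> scott_open U"
      "\<And>U V. U \<in> \<D> \<Longrightarrow> V \<in> \<D> \<Longrightarrow> \<exists>W\<in>\<D>. U \<subseteq> W \<and> V \<subseteq> W" for \<D>
    by (rule cont[rule_format]) (use that in blast)
qed

lemma bounded_valuation_finite:
  assumes "is_bounded_continuous_valuation \<nu>" and "scott_open U"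
  shows "\<nu> U < \<infinity>"
  using mono_on_opensD[OF bounded_continuous_valuationD(2)[OF assms(1)] assms(2) scott_open_UNIV]
    bounded_continuous_valuationD(4)[OF assms(1)]
  by (simp add: order.strict_trans1)

lemma SUP_eq_if_increments_bounded:
  fixes \<beta> \<nu> :: "'a \<Rightarrow> ennreal"
  assumes "D \<noteq> {}" and \<nu>W: "\<nu> W = (SUP U\<in>D. \<nu> U)" "\<nu> W < \<infinity>"
    and below: "\<And>U. U \<in> D \<Longrightarrow> \<beta> U \<le> \<beta> W"
    and increment: "\<And>U. U \<in> D \<Longrightarrow> \<beta> W + \<nu> U \<le> \<beta> U + \<nu> W"
  shows "\<beta> W = (SUP U\<in>D. \<beta> U)"
proof (rule antisym)
  have "\<nu> W + \<beta> W = (SUP U\<in>D. \<beta> W + \<nu> U)"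
    unfolding \<nu>W(1) using \<open>D \<noteq> {}\<close> by (simp add: ennreal_SUP_add_right add.commute)
  also have "\<dots> \<le> \<nu> W + (SUP U\<in>D. \<beta> U)"
  proof (rule SUP_least)
    fix U assume "U \<in> D"
    then have "\<beta> W + \<nu> U \<le> \<beta> U + \<nu> W"
      by (rule increment)
    also have "\<dots> \<le> (SUP U\<in>D. \<beta> U) + \<nu> W"
      using \<open>U \<in> D\<close> by (intro add_right_mono SUP_upper)
    finally show "\<beta> W + \<nu> U \<le> \<nu> W + (SUP U\<in>D. \<beta> U)"
      by (simp add: add.commute)
  qed
  finally show "\<beta> W \<le> (SUP U\<in>D. \<beta> U)"
    using \<nu>W(2) by (auto simp: ennreal_add_left_cancel_le)
qed (rule SUP_least[OF below])

context
  fixes \<nu> \<alpha> :: "jpt set \<Rightarrow> ennreal"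
  assumes \<nu>: "is_bounded_continuous_valuation \<nu>"
    and \<alpha>_empty: "\<alpha> {} = 0" and \<alpha>_mono: "mono_on_opens \<alpha>" and \<alpha>_modular: "modular_on_opens \<alpha>"
    and \<alpha>_increment: "\<And>U V. scott_open U \<Longrightarrow> scott_open V \<Longrightarrow> U \<subseteq> V \<Longrightarrow> \<alpha> V + \<nu> U \<le> \<alpha> U + \<nu> V"
begin

private lemma \<alpha>_le: "scott_open U \<Longrightarrow> \<alpha> U \<le> \<nu> U"
  using \<alpha>_increment[OF scott_open_empty, of U] \<alpha>_empty bounded_continuous_valuationD(1)[OF \<nu>]
  by simp

private lemma \<alpha>_finite: "scott_open U \<Longrightarrow> \<alpha> U < \<infinity>"
  using \<alpha>_le bounded_valuation_finite[OF \<nu>] by (blast intro: order.strict_trans1)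

private lemma diff_eq_ennreal:
  assumes "scott_open U"
  shows "\<nu> U - \<alpha> U = ennreal (enn2real (\<nu> U) - enn2real (\<alpha> U))"
proof -
  have "\<nu> U - \<alpha> U = ennreal (enn2real (\<nu> U)) - ennreal (enn2real (\<alpha> U))"
    using bounded_valuation_finite[OF \<nu> assms] \<alpha>_finite[OF assms] by simp
  also have "\<dots> = ennreal (enn2real (\<nu> U) - enn2real (\<alpha> U))"
    by (simp add: ennreal_minus)
  finally show ?thesis .
qed

private lemma real_increment:
  assumes "scott_open U" "scott_open V" "U \<subseteq> V"
  shows "enn2real (\<alpha> V) + enn2real (\<nu> U) \<le> enn2real (\<alpha> U) + enn2real (\<nu> V)"
proof -
  have "ennreal (enn2real (\<alpha> V) + enn2real (\<nu> U)) \<le> ennreal (enn2real (\<alpha> U) + enn2real (\<nu> V))"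
    using \<alpha>_increment[OF assms] assms \<alpha>_finite bounded_valuation_finite[OF \<nu>] by simp
  then show ?thesis by (rule ennreal_le_iff[THEN iffD1, rotated]) simp
qed

private abbreviation \<rho> :: "jpt set \<Rightarrow> real" where
  "\<rho> U \<equiv> enn2real (\<nu> U) - enn2real (\<alpha> U)"

private lemma real_diff_nonneg: "scott_open U \<Longrightarrow> 0 \<le> \<rho> U"
  using enn2real_mono[OF \<alpha>_le] bounded_valuation_finite[OF \<nu>] by simp

private lemma real_diff_mono_modular:
  "mono_on_opens \<rho>" "modular_on_opens \<rho>"
proof -
  show "mono_on_opens \<rho>"
    unfolding mono_on_opens_def
  proof (intro allI impI)
    fix U V assume "scott_open U" "scott_open V" "U \<subseteq> V"
    from real_increment[OF this] show "\<rho> U \<le> \<rho> V" by linarith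
  qed
  show "modular_on_opens \<rho>"
    using bounded_continuous_valuationD(3)[OF \<nu>] bounded_valuation_finite[OF \<nu>] \<alpha>_modular \<alpha>_finite
    by (intro modular_on_opens_diff modular_on_opens_enn2real)
qed

lemma is_valuation_diff: "is_valuation (\<lambda>U. \<nu> U - \<alpha> U)"
  unfolding is_valuation_iff
proof (intro conjI)
  show "\<nu> {} - \<alpha> {} = 0" by (simp add: \<alpha>_empty bounded_continuous_valuationD(1)[OF \<nu>])
  show "mono_on_opens (\<lambda>U. \<nu> U - \<alpha> U)"
    using real_diff_mono_modular(1) by (simp add: mono_on_opens_def diff_eq_ennreal ennreal_leI)
  show "modular_on_opens (\<lambda>U. \<nu> U - \<alpha> U)"
    unfolding modular_on_opens_def
  proof (intro allI impI)
    fix A B assume A: "scott_open A" and B: "scott_open B"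
    then have AB: "scott_open (A \<union> B)" "scott_open (A \<inter> B)"
      by (simp_all add: scott_open_Un scott_open_Int)
    have "\<nu> A - \<alpha> A + (\<nu> B - \<alpha> B) = ennreal (\<rho> A + \<rho> B)"
      using A B by (simp only: diff_eq_ennreal ennreal_plus real_diff_nonneg)
    also have "\<rho> A + \<rho> B = \<rho> (A \<union> B) + \<rho> (A \<inter> B)"
      by (rule modular_on_opensD[OF real_diff_mono_modular(2) A B])
    also have "ennreal \<dots> = \<nu> (A \<union> B) - \<alpha> (A \<union> B) + (\<nu> (A \<inter> B) - \<alpha> (A \<inter> B))"
      using AB by (simp only: diff_eq_ennreal ennreal_plus real_diff_nonneg)
    finally show "\<nu> A - \<alpha> A + (\<nu> B - \<alpha> B) = \<nu> (A \<union> B) - \<alpha> (A \<union> B) + (\<nu> (A \<inter> B) - \<alpha> (A \<inter> B))" .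
  qed
qed

lemma is_bounded_continuous_valuation_diff: "is_bounded_continuous_valuation (\<lambda>U. \<nu> U - \<alpha> U)"
  unfolding is_bounded_continuous_valuation_def is_continuous_valuation_def
proof (intro conjI allI impI is_valuation_diff)
  show "\<nu> UNIV - \<alpha> UNIV < \<infinity>"
    using bounded_continuous_valuationD(4)[OF \<nu>] diff_le_self_ennreal order.strict_trans1 by blast
  fix \<D> assume \<D>: "\<D> \<noteq> {} \<and> (\<forall>U\<in>\<D>. scott_open U) \<and> (\<forall>U\<in>\<D>. \<forall>V\<in>\<D>. \<exists>W\<in>\<D>. U \<subseteq> W \<and> V \<subseteq> W)"
  define W where "W = \<Union>\<D>"
  have W: "scott_open W"
    using \<D> by (simp add: W_def scott_open_Union)
  have diff_mono: "mono_on_opens (\<lambda>U. \<nu> U - \<alpha> U)"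
    using is_valuation_diff by (simp add: is_valuation_iff)
  show "\<nu> (\<Union>\<D>) - \<alpha> (\<Union>\<D>) = (SUP U\<in>\<D>. \<nu> U - \<alpha> U)"
    unfolding W_def[symmetric]
  proof (rule SUP_eq_if_increments_bounded)
    show "\<D> \<noteq> {}"
      using \<D> by blast
    show "\<nu> W = (SUP U\<in>\<D>. \<nu> U)"
      using \<D> unfolding W_def by (intro bounded_continuous_valuationD(5)[OF \<nu>]) auto
    show "\<nu> W < \<infinity>"
      by (rule bounded_valuation_finite[OF \<nu> W])
    fix U assume "U \<in> \<D>"
    then have U: "scott_open U" and "U \<subseteq> W"
      using \<D> by (auto simp: W_def)
    then show "\<nu> U - \<alpha> U \<le> \<nu> W - \<alpha> W"
      by (rule mono_on_opensD[OF diff_mono _ W])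
    have "\<nu> W - \<alpha> W + \<nu> U = ennreal (\<rho> W + enn2real (\<nu> U))"
      using real_diff_nonneg[OF W] bounded_valuation_finite[OF \<nu> U] by (simp add: diff_eq_ennreal[OF W])
    also have "\<dots> \<le> ennreal (\<rho> U + enn2real (\<nu> W))"
      using mono_on_opensD[OF mono_on_opens_enn2real[OF \<alpha>_mono \<alpha>_finite] U W \<open>U \<subseteq> W\<close>]
      by (intro ennreal_leI) simp
    also have "\<dots> = \<nu> U - \<alpha> U + \<nu> W"
      using real_diff_nonneg[OF U] bounded_valuation_finite[OF \<nu> W] by (simp add: diff_eq_ennreal[OF U])
    finally show "\<nu> W - \<alpha> W + \<nu> U \<le> \<nu> U - \<alpha> U + \<nu> W" .
  qed
qed

end

lemma sum_le_atom_sum: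
  assumes "finite F" "F \<subseteq> Nset"
  shows "(\<Sum>a\<in>F. nu_single \<nu> a W) \<le> atom_sum \<nu> W"
  unfolding atom_sum_def nonneg_infsum_complete[OF zero_le] using assms by (intro SUP_upper) simp

context
  fixes \<nu> :: "jpt set \<Rightarrow> ennreal"
  assumes \<nu>: "is_bounded_continuous_valuation \<nu>"
begin

private abbreviation r :: "jpt set \<Rightarrow> real" where
  "r U \<equiv> enn2real (\<nu> U)"

private lemma r_mono: "mono_on_opens r"
  using mono_on_opens_enn2real bounded_continuous_valuationD(2)[OF \<nu>] bounded_valuation_finite[OF \<nu>] .

private lemma r_modular: "modular_on_opens r"
  using modular_on_opens_enn2real bounded_continuous_valuationD(3)[OF \<nu>] bounded_valuation_finite[OF \<nu>] .

private lemma ennreal_r: "scott_open U \<Longrightarrow> ennreal (r U) = \<nu> U"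
  using bounded_valuation_finite[OF \<nu>] by simp

lemma nu_single_eq_ennreal:
  assumes "a \<in> Nset" and "scott_open W"
  shows "nu_single \<nu> a W = ennreal (nu_single_real r a W)"
proof -
  have opens: "scott_open (W \<inter> Uset a)" "scott_open (W \<inter> Vset a)"
    using assms by (simp_all add: scott_open_Int scott_open_Uset scott_open_Vset)
  have "ennreal (nu_single_real r a W) = ennreal (r (W \<inter> Uset a)) - ennreal (r (W \<inter> Vset a))"
    by (simp add: nu_single_real_def ennreal_minus)
  also have "\<dots> = nu_single \<nu> a W"
    using opens by (simp add: nu_single_def ennreal_r)
  finally show ?thesis ..
qed

lemma atom_sum_empty: "atom_sum \<nu> {} = 0"
  by (simp add: atom_sum_def nu_single_def bounded_continuous_valuationD(1)[OF \<nu>])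

lemma mono_on_opens_atom_sum: "mono_on_opens (atom_sum \<nu>)"
  unfolding mono_on_opens_def atom_sum_def
proof (intro allI impI)
  fix U V assume "scott_open U" "scott_open V" "U \<subseteq> V"
  then have "nu_single \<nu> a U \<le> nu_single \<nu> a V" if "a \<in> Nset" for a
    using nu_single_real_mono[OF r_mono r_modular that] by (simp add: nu_single_eq_ennreal that ennreal_leI)
  then show "(\<Sum>\<^sub>\<infinity>a\<in>Nset. nu_single \<nu> a U) \<le> (\<Sum>\<^sub>\<infinity>a\<in>Nset. nu_single \<nu> a V)"
    by (intro infsum_mono nonneg_summable_on_complete) auto
qed

lemma modular_on_opens_atom_sum: "modular_on_opens (atom_sum \<nu>)"
  unfolding modular_on_opens_def
proof (intro allI impI)
  fix A B assume A: "scott_open A" and B: "scott_open B"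
  then have AB: "scott_open (A \<union> B)" "scott_open (A \<inter> B)"
    by (simp_all add: scott_open_Un scott_open_Int)
  have "nu_single \<nu> a A + nu_single \<nu> a B = nu_single \<nu> a (A \<union> B) + nu_single \<nu> a (A \<inter> B)"
    if a: "a \<in> Nset" for a
  proof -
    note nonneg = nu_single_real_nonneg[OF r_mono r_modular a]
    have "nu_single \<nu> a A + nu_single \<nu> a B = ennreal (nu_single_real r a A + nu_single_real r a B)"
      using A B nonneg by (simp add: nu_single_eq_ennreal a)
    also have "\<dots> = ennreal (nu_single_real r a (A \<union> B) + nu_single_real r a (A \<inter> B))"
      using modular_on_opensD[OF modular_on_opens_nu_single_real[OF r_modular a] A B] by simp
    also have "\<dots> = nu_single \<nu> a (A \<union> B) + nu_single \<nu> a (A \<inter> B)"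
      using AB nonneg by (simp add: nu_single_eq_ennreal a)
    finally show ?thesis .
  qed
  then show "atom_sum \<nu> A + atom_sum \<nu> B = atom_sum \<nu> (A \<union> B) + atom_sum \<nu> (A \<inter> B)"
    unfolding atom_sum_def
    by (simp add: infsum_add[symmetric] nonneg_summable_on_complete cong: infsum_cong)
qed

private lemma sum_nu_single_real_nonneg:
  assumes "finite F" "F \<subseteq> Nset" and "scott_open W"
  shows "0 \<le> (\<Sum>a\<in>F. nu_single_real r a W)"
  using assms by (intro sum_nonneg nu_single_real_nonneg[OF r_mono r_modular]) auto

lemma sum_nu_single_eq_ennreal:
  assumes "finite F" "F \<subseteq> Nset" and "scott_open W"
  shows "(\<Sum>a\<in>F. nu_single \<nu> a W) = ennreal (\<Sum>a\<in>F. nu_single_real r a W)"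
proof -
  have "(\<Sum>a\<in>F. nu_single \<nu> a W) = (\<Sum>a\<in>F. ennreal (nu_single_real r a W))"
    using assms by (intro sum.cong) (auto simp: nu_single_eq_ennreal)
  also have "\<dots> = ennreal (\<Sum>a\<in>F. nu_single_real r a W)"
    using assms nu_single_real_nonneg[OF r_mono r_modular] by (intro sum_ennreal) auto
  finally show ?thesis .
qed

lemma atom_sum_increment_le:
  assumes U: "scott_open U" and V: "scott_open V" and "U \<subseteq> V"
  shows "atom_sum \<nu> V + \<nu> U \<le> atom_sum \<nu> U + \<nu> V"
proof -
  have "r U \<le> r V"
    by (rule mono_on_opensD[OF r_mono U V \<open>U \<subseteq> V\<close>])
  have "atom_sum \<nu> V \<le> atom_sum \<nu> U + ennreal (r V - r U)"
    unfolding atom_sum_def[of \<nu> V]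
  proof (rule infsum_le_finite_sums)
    show "(\<lambda>a. nu_single \<nu> a V) summable_on Nset"
      by (rule nonneg_summable_on_complete) simp
    fix F assume F: "finite F" "F \<subseteq> Nset"
    have "(\<Sum>a\<in>F. nu_single \<nu> a V) = ennreal (\<Sum>a\<in>F. nu_single_real r a V)"
      by (rule sum_nu_single_eq_ennreal[OF F V])
    also have "\<dots> \<le> ennreal ((\<Sum>a\<in>F. nu_single_real r a U) + (r V - r U))"
      using sum_nu_single_real_diff_le[OF r_mono r_modular F U V \<open>U \<subseteq> V\<close>] by (rule ennreal_leI)
    also have "\<dots> = (\<Sum>a\<in>F. nu_single \<nu> a U) + ennreal (r V - r U)"
      using sum_nu_single_eq_ennreal[OF F U] sum_nu_single_real_nonneg[OF F U] \<open>r U \<le> r V\<close>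
      by simp
    also have "\<dots> \<le> atom_sum \<nu> U + ennreal (r V - r U)"
      using sum_le_atom_sum[OF F] by (rule add_right_mono)
    finally show "(\<Sum>a\<in>F. nu_single \<nu> a V) \<le> atom_sum \<nu> U + ennreal (r V - r U)" .
  qed
  then have "atom_sum \<nu> V + \<nu> U \<le> atom_sum \<nu> U + ennreal (r V - r U) + ennreal (r U)"
    using ennreal_r[OF U] by (simp add: add_right_mono)
  also have "\<dots> = atom_sum \<nu> U + \<nu> V"
    using \<open>r U \<le> r V\<close> ennreal_r[OF V] by (simp add: add.assoc flip: ennreal_plus)
  finally show ?thesis .
qed

lemma atom_sum_le: "scott_open U \<Longrightarrow> atom_sum \<nu> U \<le> \<nu> U"
  using atom_sum_increment_le[OF scott_open_empty]
  by (simp add: atom_sum_empty bounded_continuous_valuationD(1)[OF \<nu>])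

end

theorem proposition3p7:
  assumes "is_bounded_continuous_valuation \<nu>"
  shows "(\<forall>U. scott_open U \<longrightarrow> atom_sum \<nu> U \<le> \<nu> U)
         \<and> is_bounded_continuous_valuation (nu_star \<nu>)"
proof
  show "\<forall>U. scott_open U \<longrightarrow> atom_sum \<nu> U \<le> \<nu> U"
    using atom_sum_le[OF assms] by blast
  have "nu_star \<nu> = (\<lambda>U. \<nu> U - atom_sum \<nu> U)"
    by (simp add: fun_eq_iff nu_star_def)
  then show "is_bounded_continuous_valuation (nu_star \<nu>)"
    using is_bounded_continuous_valuation_diff[OF assms atom_sum_empty[OF assms]
        mono_on_opens_atom_sum[OF assms] modular_on_opens_atom_sum[OF assms]
        atom_sum_increment_le[OF assms]]
    by simp
qed

end
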